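(* Let $A$ be a Cayley--Dickson algebra over a field $F$ and $f(x)\in A[x]$. If $\lambda\in A\setminus F$ is a spherical root of $f(x)$, then $\lambda$ is a root of the companion polynomial $C_f(x)$.
   Context: For an $F$-algebra $B$ with involution and $\gamma\in F^\times$, the Cayley--Dickson double $B\{\gamma\}$ is $B\times B$ with componentwise linear operations, product $(a,b)(c,d)=(ac+\gamma\bar d b,\ da+b\bar c)$ and involution $\overline{(a,b)}=(\bar a,-b)$. Cayley--Dickson algebras over $F$: $A_1=F[\ell_1:\ell_1^2=\ell_1+\mu]$ with $\mu\in F$, $4\mu+1\neq0$, involution $\overline{\alpha+\beta\ell_1}=(\alpha+\beta)-\beta\ell_1$, and $A_{k+1}=A_k\{\gamma_k\}$, $\gamma_k\in F^\times$; $F$ is identified with $F\cdot1$. Trace $\mathrm{tr}(\lambda)=\lambda+\bar\lambda\in F$, norm $\mathrm{n}(\lambda)=\bar\lambda\lambda\in F$, characteristic polynomial $p_\lambda(x)=x^2-\mathrm{tr}(\lambda)x+\mathrm{n}(\lambda)\in F[x]$. The polynomial ring $A[x]=A\otimes_F F[x]$ has central indeterminate $x$; $f(x)=a_mx^m+\dots+a_0$ with $a_k\in A$, products via $(ax^i)(bx^j)=(ab)x^{i+j}$, substitution $f(r)=\sum_k a_k(r^k)$. The involution extends by $\overline{f(x)}=\bar a_mx^m+\dots+\bar a_0$, and the companion polynomial is $C_f(x)=\overline{f(x)}\cdot f(x)$, which lies in $F[x]$ (it is the norm of $f$ in the Cayley--Dickson algebra $A\otimes_F F(x)$). A root $\lambda\in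 A\setminus F$ of $f$ is a spherical root if every $r\in A$ with $p_\lambda(r)=0$ is also a root of $f$. *)

theory Defs
  imports Main
begin

text \<open>An element of A_1 = F[l1] is
  Q alpha beta (meaning alpha + beta l1); an element of B{gamma} = B x B is D a b.
  The algebra A_k (k >= 1) is determined by mu and the list gs of doubling
  parameters, written OUTERMOST FIRST: gs = [gamma_(k-1), ..., gamma_1], so that
  A_(k) = A_(k-1){gamma_(k-1)}.  The carrier of A_k is cd_carrier (length gs).\<close>

datatype 'a cd = Q 'a 'a | D "'a cd" "'a cd"

fun cd_carrier :: "nat \<Rightarrow> 'a cd set" where
  "cd_carrier 0 = {Q a b | a b. True}"
| "cd_carrier (Suc n) = {D a b | a b. a \<in> cd_carrier n \<and> b \<in> cd_carrier n}"

fun cd_add :: "'a::field cd \<Rightarrow> 'a cd \<Rightarrow> 'a cd" where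
  "cd_add (Q a b) (Q c d) = Q (a + c) (b + d)"
| "cd_add (D a b) (D c d) = D (cd_add a c) (cd_add b d)"
| "cd_add _ _ = undefined"

fun cd_smult :: "'a::field \<Rightarrow> 'a cd \<Rightarrow> 'a cd" where
  "cd_smult t (Q a b) = Q (t * a) (t * b)"
| "cd_smult t (D a b) = D (cd_smult t a) (cd_smult t b)"

definition cd_neg :: "'a::field cd \<Rightarrow> 'a cd" where
  "cd_neg x = cd_smult (-1) x"

definition cd_sub :: "'a::field cd \<Rightarrow> 'a cd \<Rightarrow> 'a cd" where
  "cd_sub x y = cd_add x (cd_neg y)"

fun cd_conj :: "'a::field cd \<Rightarrow> 'a cd" where
  "cd_conj (Q a b) = Q (a + b) (- b)"
| "cd_conj (D a b) = D (cd_conj a) (cd_neg b)"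

text \<open>Embedding of F as F * 1 in A_(n+1) (n = number of doublings).\<close>
fun cd_scalar :: "nat \<Rightarrow> 'a::field \<Rightarrow> 'a cd" where
  "cd_scalar 0 c = Q c 0"
| "cd_scalar (Suc n) c = D (cd_scalar n c) (cd_scalar n 0)"

abbreviation cd_zero :: "nat \<Rightarrow> 'a::field cd" where
  "cd_zero n \<equiv> cd_scalar n 0"

abbreviation cd_one :: "nat \<Rightarrow> 'a::field cd" where
  "cd_one n \<equiv> cd_scalar n 1"

text \<open>Multiplication: (a+b l)(c+d l) = ac + mu bd + (ad + bc + bd) l on A_1, and
  (a,b)(c,d) = (ac + gamma conj(d) b, da + b conj(c)) for a doubling.\<close>
fun cd_mult :: "'a::field \<Rightarrow> 'a list \<Rightarrow> 'a cd \<Rightarrow> 'a cd \<Rightarrow> 'a cd" where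
  "cd_mult mu [] (Q a b) (Q c d) = Q (a * c + mu * (b * d)) (a * d + b * c + b * d)"
| "cd_mult mu (g # gs) (D a b) (D c d) =
     D (cd_add (cd_mult mu gs a c) (cd_smult g (cd_mult mu gs (cd_conj d) b)))
       (cd_add (cd_mult mu gs d a) (cd_mult mu gs b (cd_conj c)))"
| "cd_mult _ _ _ _ = undefined"

fun cd_pow :: "'a::field \<Rightarrow> 'a list \<Rightarrow> 'a cd \<Rightarrow> nat \<Rightarrow> 'a cd" where
  "cd_pow mu gs r 0 = cd_one (length gs)"
| "cd_pow mu gs r (Suc k) = cd_mult mu gs r (cd_pow mu gs r k)"

definition cd_sum :: "nat \<Rightarrow> 'a::field cd list \<Rightarrow> 'a cd" where
  "cd_sum n xs = foldr cd_add xs (cd_zero n)"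

text \<open>A polynomial f(x) = a_m x^m + ... + a_0 in A[x] is its coefficient list
  [a_0, ..., a_m]; substitution f(r) = sum_k a_k (r^k).\<close>
definition cd_poly_eval :: "'a::field \<Rightarrow> 'a list \<Rightarrow> 'a cd list \<Rightarrow> 'a cd \<Rightarrow> 'a cd" where
  "cd_poly_eval mu gs fs r =
     cd_sum (length gs) (map (\<lambda>k. cd_mult mu gs (fs ! k) (cd_pow mu gs r k)) [0..<length fs])"

text \<open>Companion polynomial C_f = conj(f) * f in A[x]: coefficient of x^m is
  sum over i + j = m of conj(a_i) a_j.\<close>
definition cd_companion :: "'a::field \<Rightarrow> 'a list \<Rightarrow> 'a cd list \<Rightarrow> 'a cd list" where
  "cd_companion mu gs fs =
     map (\<lambda>m. cd_sum (length gs)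
        (map (\<lambda>i. cd_mult mu gs (cd_conj (fs ! i)) (fs ! (m - i)))
           (filter (\<lambda>i. i < length fs \<and> m - i < length fs) [0..<Suc m])))
       [0..<2 * length fs]"

text \<open>Trace, norm (as elements of F * 1 inside A) and the characteristic
  polynomial evaluated at r: p_lambda(r) = r^2 - tr(lambda) r + n(lambda).\<close>
definition cd_tr :: "'a::field \<Rightarrow> 'a list \<Rightarrow> 'a cd \<Rightarrow> 'a cd" where
  "cd_tr mu gs l = cd_add l (cd_conj l)"

definition cd_norm :: "'a::field \<Rightarrow> 'a list \<Rightarrow> 'a cd \<Rightarrow> 'a cd" where
  "cd_norm mu gs l = cd_mult mu gs (cd_conj l) l"

definition cd_charpoly_eval :: "'a::field \<Rightarrow> 'a list \<Rightarrow> 'a cd \<Rightarrow> 'a cd \<Rightarrow> 'a cd" where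
  "cd_charpoly_eval mu gs l r =
     cd_add (cd_sub (cd_pow mu gs r 2) (cd_mult mu gs (cd_tr mu gs l) r)) (cd_norm mu gs l)"

definition cd_is_scalar :: "'a list \<Rightarrow> 'a::field cd \<Rightarrow> bool" where
  "cd_is_scalar gs x \<longleftrightarrow> (\<exists>c. x = cd_scalar (length gs) c)"

definition cd_valid :: "'a::field \<Rightarrow> 'a list \<Rightarrow> bool" where
  "cd_valid mu gs \<longleftrightarrow> 4 * mu + 1 \<noteq> 0 \<and> (\<forall>g \<in> set gs. g \<noteq> 0)"

definition cd_spherical_root :: "'a::field \<Rightarrow> 'a list \<Rightarrow> 'a cd list \<Rightarrow> 'a cd \<Rightarrow> bool" where
  "cd_spherical_root mu gs fs l \<longleftrightarrow>
     l \<in> cd_carrier (length gs) \<and> \<not> cd_is_scalar gs l \<and>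
     cd_poly_eval mu gs fs l = cd_zero (length gs) \<and>
     (\<forall>r \<in> cd_carrier (length gs).
        cd_charpoly_eval mu gs l r = cd_zero (length gs) \<longrightarrow>
        cd_poly_eval mu gs fs r = cd_zero (length gs))"

end

theory Submission
  imports Defs
begin

text \<open>Let \<open>t = tr(\<lambda>)\<close> and \<open>N = n(\<lambda>)\<close>. Every \<open>r\<close> with \<open>p\<^sub>\<lambda>(r) = 0\<close> satisfies
  \<open>r\<^sup>2 = t r - N\<close>, so \<open>r\<^sup>k = U\<^sub>k r + V\<^sub>k\<close>, where \<open>x\<^sup>k \<equiv> U\<^sub>k x + V\<^sub>k\<close> modulo \<open>x\<^sup>2 - t x + N\<close>;
  hence \<open>f(r) = \<alpha> r + \<beta>\<close> with \<open>\<alpha> = \<Sum> U\<^sub>k a\<^sub>k\<close> and \<open>\<beta> = \<Sum> V\<^sub>k a\<^sub>k\<close> independent of \<open>r\<close>.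
  Since \<open>\<lambda> \<notin> F\<close> there is a trace-zero direction \<open>u\<close>, not a zero divisor, in which the
  sphere \<open>p\<^sub>\<lambda> = 0\<close> has a second point \<open>r = \<lambda> + \<tau> u\<close> with \<open>\<tau> \<noteq> 0\<close>; then
  \<open>0 = f(r) - f(\<lambda>) = \<tau> \<alpha> u\<close> gives \<open>\<alpha> = 0\<close>, and then \<open>\<beta> = 0\<close>.
  For \<open>C\<^sub>f\<close> the same coefficients are \<open>\<Sum> U(i+j) conj(a\<^sub>i) a\<^sub>j\<close> and \<open>\<Sum> V(i+j) conj(a\<^sub>i) a\<^sub>j\<close>,
  and the addition formulas for \<open>U\<close> and \<open>V\<close> turn them into \<open>\<Sum>\<^sub>i conj(a\<^sub>i) (A\<^sub>i \<alpha> + B\<^sub>i \<beta>) = 0\<close>;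
  so \<open>C\<^sub>f(\<lambda>) = 0\<close>.\<close>

section \<open>Coordinates\<close>

fun cd_coord :: "'a::zero cd \<Rightarrow> nat \<Rightarrow> 'a" where
  "cd_coord (Q a b) i = (if i = 0 then a else if i = 1 then b else 0)"
| "cd_coord (D x y) i = (if even i then cd_coord x (i div 2) else cd_coord y (i div 2))"

lemma Q_in_cd_carrier_iff [simp]: "Q a b \<in> cd_carrier n \<longleftrightarrow> n = 0"
  by (cases n) auto

lemma D_in_cd_carrier_iff [simp]:
  "D a b \<in> cd_carrier n \<longleftrightarrow> (\<exists>m. n = Suc m \<and> a \<in> cd_carrier m \<and> b \<in> cd_carrier m)"
  by (cases n) auto

lemma cd_eqI:
  assumes "x \<in> cd_carrier n" "y \<in> cd_carrier n" "\<And>i. cd_coord x i = cd_coord y i"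
  shows "x = y"
  using assms
proof (induction n arbitrary: x y)
  case 0
  then obtain a b c d where "x = Q a b" "y = Q c d" by auto
  with "0.prems"(3)[of 0] "0.prems"(3)[of 1] show ?case by simp
next
  case (Suc n)
  then obtain a b c d where xy: "x = D a b" "y = D c d"
    and abcd: "a \<in> cd_carrier n" "b \<in> cd_carrier n" "c \<in> cd_carrier n" "d \<in> cd_carrier n"
    by auto
  have "a = c" using Suc.IH[OF abcd(1,3)] Suc.prems(3)[of "2 * _"] xy by auto
  moreover have "b = d" using Suc.IH[OF abcd(2,4)] Suc.prems(3)[of "2 * _ + 1"] xy by auto
  ultimately show ?case using xy by simp
qed

lemma cd_add_carrier [simp, intro]:
  "x \<in> cd_carrier n \<Longrightarrow> y \<in> cd_carrier n \<Longrightarrow> cd_add x y \<in> cd_carrier n"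
  by (induction n arbitrary: x y) auto

lemma cd_smult_carrier [simp, intro]: "x \<in> cd_carrier n \<Longrightarrow> cd_smult c x \<in> cd_carrier n"
  by (induction n arbitrary: x) auto

lemma cd_neg_carrier [simp, intro]: "x \<in> cd_carrier n \<Longrightarrow> cd_neg x \<in> cd_carrier n"
  by (simp add: cd_neg_def)

lemma cd_sub_carrier [simp, intro]:
  "x \<in> cd_carrier n \<Longrightarrow> y \<in> cd_carrier n \<Longrightarrow> cd_sub x y \<in> cd_carrier n"
  by (simp add: cd_sub_def)

lemma cd_conj_carrier [simp, intro]: "x \<in> cd_carrier n \<Longrightarrow> cd_conj x \<in> cd_carrier n"
  by (induction n arbitrary: x) (auto simp: cd_neg_def)

lemma cd_scalar_carrier [simp, intro]: "cd_scalar n c \<in> cd_carrier n"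
  by (induction n arbitrary: c) auto

lemma cd_mult_carrier [simp, intro]:
  "x \<in> cd_carrier (length gs) \<Longrightarrow> y \<in> cd_carrier (length gs) \<Longrightarrow>
   cd_mult mu gs x y \<in> cd_carrier (length gs)"
  by (induction gs arbitrary: x y) auto

lemma cd_pow_carrier [simp, intro]:
  "x \<in> cd_carrier (length gs) \<Longrightarrow> cd_pow mu gs x k \<in> cd_carrier (length gs)"
  by (induction k) auto

lemma cd_sum_carrier [intro]:
  "(\<And>x. x \<in> set xs \<Longrightarrow> x \<in> cd_carrier n) \<Longrightarrow> cd_sum n xs \<in> cd_carrier n"
  unfolding cd_sum_def by (induction xs) auto

lemma cd_coord_add:
  "x \<in> cd_carrier n \<Longrightarrow> y \<in> cd_carrier n \<Longrightarrow> cd_coord (cd_add x y) i = cd_coord x i + cd_coord y i"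
  by (induction n arbitrary: x y i) auto

lemma cd_coord_smult [simp]: "cd_coord (cd_smult c x) i = c * cd_coord x i"
  by (induction x arbitrary: i) auto

lemma cd_coord_neg [simp]: "cd_coord (cd_neg x) i = - cd_coord x i"
  by (simp add: cd_neg_def)

lemma cd_coord_sub:
  "x \<in> cd_carrier n \<Longrightarrow> y \<in> cd_carrier n \<Longrightarrow> cd_coord (cd_sub x y) i = cd_coord x i - cd_coord y i"
  by (simp add: cd_sub_def cd_coord_add[where n = n])

lemma cd_coord_scalar [simp]: "cd_coord (cd_scalar n c) i = (if i = 0 then c else 0)"
  by (induction n arbitrary: c i) auto

lemma cd_coord_sum:
  "(\<And>x. x \<in> set xs \<Longrightarrow> f x \<in> cd_carrier n) \<Longrightarrow>
   cd_coord (cd_sum n (map f xs)) i = (\<Sum>x\<leftarrow>xs. cd_coord (f x) i)"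
proof (induction xs)
  case (Cons a xs)
  have "cd_sum n (map f xs) \<in> cd_carrier n" using Cons.prems by (intro cd_sum_carrier) auto
  then show ?case using Cons by (simp add: cd_sum_def cd_coord_add[where n = n])
qed (simp add: cd_sum_def)

section \<open>Linear structure, involution and bilinearity of the product\<close>

lemma cd_add_zero_right [simp]: "x \<in> cd_carrier n \<Longrightarrow> cd_add x (cd_zero n) = x"
  by (rule cd_eqI[where n = n]) (auto simp: cd_coord_add[where n = n])

lemma cd_add_zero_left [simp]: "x \<in> cd_carrier n \<Longrightarrow> cd_add (cd_zero n) x = x"
  by (rule cd_eqI[where n = n]) (auto simp: cd_coord_add[where n = n])

lemma cd_smult_smult [simp]: "cd_smult a (cd_smult b x) = cd_smult (a * b) x"
  by (induction x) (auto simp: mult.assoc)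

lemma cd_smult_zero_right [simp]: "cd_smult c (cd_zero n) = cd_zero n"
  by (induction n) auto

lemma cd_smult_zero_left: "x \<in> cd_carrier n \<Longrightarrow> cd_smult 0 x = cd_zero n"
  by (rule cd_eqI[where n = n]) auto

lemma cd_scalar_eq_smult_one: "cd_scalar n c = cd_smult c (cd_one n)"
  by (rule cd_eqI[where n = n]) auto

lemma cd_smult_eq_zero_iff:
  assumes "x \<in> cd_carrier n"
  shows "cd_smult c x = cd_zero n \<longleftrightarrow> c = 0 \<or> x = cd_zero n"
proof (cases "c = 0")
  case False
  have "x = cd_zero n" if "cd_smult c x = cd_zero n"
  proof (rule cd_eqI[OF assms cd_scalar_carrier])
    show "cd_coord x i = cd_coord (cd_zero n) i" for i
      using arg_cong[OF that, of "\<lambda>z. cd_coord z i"] False by auto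
  qed
  then show ?thesis using False by auto
qed (use assms cd_smult_zero_left in auto)

lemma cd_conj_add:
  "x \<in> cd_carrier n \<Longrightarrow> y \<in> cd_carrier n \<Longrightarrow> cd_conj (cd_add x y) = cd_add (cd_conj x) (cd_conj y)"
proof (induction n arbitrary: x y)
  case (Suc n)
  then obtain a b c d where "x = D a b" "y = D c d"
    "a \<in> cd_carrier n" "b \<in> cd_carrier n" "c \<in> cd_carrier n" "d \<in> cd_carrier n"
    by auto
  with Suc.IH show ?case
    by (auto intro!: cd_eqI[where n = n] simp: cd_neg_def algebra_simps cd_coord_add[where n = n])
qed (auto simp: algebra_simps)

lemma cd_conj_smult: "cd_conj (cd_smult c x) = cd_smult c (cd_conj x)"
  by (induction x) (auto simp: cd_neg_def algebra_simps)

lemma cd_conj_conj [simp]: "x \<in> cd_carrier n \<Longrightarrow> cd_conj (cd_conj x) = x"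
proof (induction n arbitrary: x)
  case (Suc n)
  then obtain a b where "x = D a b" "a \<in> cd_carrier n" "b \<in> cd_carrier n" by auto
  with Suc.IH show ?case by (auto intro!: cd_eqI[where n = n] simp: cd_neg_def cd_conj_smult)
qed auto

lemma cd_conj_scalar [simp]: "cd_conj (cd_scalar n c) = cd_scalar n c"
  by (induction n arbitrary: c) (auto simp: cd_neg_def)

lemma cd_conj_eq_zero_iff: "x \<in> cd_carrier n \<Longrightarrow> cd_conj x = cd_zero n \<longleftrightarrow> x = cd_zero n"
  by (metis cd_conj_conj cd_conj_scalar)

lemma cd_mult_add_distrib:
  assumes "x \<in> cd_carrier (length gs)" "y \<in> cd_carrier (length gs)" "z \<in> cd_carrier (length gs)"
  shows "cd_mult mu gs x (cd_add y z) = cd_add (cd_mult mu gs x y) (cd_mult mu gs x z) \<and>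
         cd_mult mu gs (cd_add y z) x = cd_add (cd_mult mu gs y x) (cd_mult mu gs z x)"
  using assms
proof (induction gs arbitrary: x y z)
  case (Cons g gs)
  let ?n = "length gs"
  obtain a b c d e f where "x = D a b" "y = D c d" "z = D e f"
    "a \<in> cd_carrier ?n" "b \<in> cd_carrier ?n" "c \<in> cd_carrier ?n"
    "d \<in> cd_carrier ?n" "e \<in> cd_carrier ?n" "f \<in> cd_carrier ?n"
    using Cons.prems by auto
  with Cons.IH show ?case
    by (auto intro!: cd_eqI[where n = ?n]
        simp: cd_conj_add[where n = ?n] cd_coord_add[where n = ?n] algebra_simps)
qed (auto simp: algebra_simps)

lemma cd_mult_add_right:
  "x \<in> cd_carrier (length gs) \<Longrightarrow> y \<in> cd_carrier (length gs) \<Longrightarrow> z \<in> cd_carrier (length gs) \<Longrightarrow>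
   cd_mult mu gs x (cd_add y z) = cd_add (cd_mult mu gs x y) (cd_mult mu gs x z)"
  using cd_mult_add_distrib by blast

lemma cd_mult_add_left:
  "x \<in> cd_carrier (length gs) \<Longrightarrow> y \<in> cd_carrier (length gs) \<Longrightarrow> z \<in> cd_carrier (length gs) \<Longrightarrow>
   cd_mult mu gs (cd_add y z) x = cd_add (cd_mult mu gs y x) (cd_mult mu gs z x)"
  using cd_mult_add_distrib by blast

lemma cd_mult_smult_distrib:
  assumes "x \<in> cd_carrier (length gs)" "y \<in> cd_carrier (length gs)"
  shows "cd_mult mu gs (cd_smult c x) y = cd_smult c (cd_mult mu gs x y) \<and>
         cd_mult mu gs y (cd_smult c x) = cd_smult c (cd_mult mu gs y x)"
  using assms
proof (induction gs arbitrary: x y)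
  case (Cons g gs)
  let ?n = "length gs"
  obtain a b e f where "x = D a b" "y = D e f"
    "a \<in> cd_carrier ?n" "b \<in> cd_carrier ?n" "e \<in> cd_carrier ?n" "f \<in> cd_carrier ?n"
    using Cons.prems by auto
  with Cons.IH show ?case
    by (auto intro!: cd_eqI[where n = ?n] simp: cd_conj_smult cd_coord_add[where n = ?n] algebra_simps)
qed (auto simp: algebra_simps)

lemma cd_mult_smult_left:
  "x \<in> cd_carrier (length gs) \<Longrightarrow> y \<in> cd_carrier (length gs) \<Longrightarrow>
   cd_mult mu gs (cd_smult c x) y = cd_smult c (cd_mult mu gs x y)"
  using cd_mult_smult_distrib by blast

lemma cd_mult_smult_right:
  "x \<in> cd_carrier (length gs) \<Longrightarrow> y \<in> cd_carrier (length gs) \<Longrightarrow>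
   cd_mult mu gs x (cd_smult c y) = cd_smult c (cd_mult mu gs x y)"
  using cd_mult_smult_distrib by blast

lemma cd_mult_zero_left [simp]:
  "x \<in> cd_carrier (length gs) \<Longrightarrow> cd_mult mu gs (cd_zero (length gs)) x = cd_zero (length gs)"
  by (metis cd_mult_smult_left cd_smult_zero_left cd_smult_zero_right cd_mult_carrier cd_scalar_carrier)

lemma cd_mult_zero_right [simp]:
  "x \<in> cd_carrier (length gs) \<Longrightarrow> cd_mult mu gs x (cd_zero (length gs)) = cd_zero (length gs)"
  by (metis cd_mult_smult_right cd_smult_zero_left cd_smult_zero_right cd_mult_carrier cd_scalar_carrier)

lemma cd_mult_one:
  assumes "x \<in> cd_carrier (length gs)"
  shows "cd_mult mu gs (cd_one (length gs)) x = x \<and> cd_mult mu gs x (cd_one (length gs)) = x"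
  using assms
proof (induction gs arbitrary: x)
  case (Cons g gs)
  then obtain a b where "x = D a b" "a \<in> cd_carrier (length gs)" "b \<in> cd_carrier (length gs)"
    by auto
  with Cons.IH show ?case
    by (auto intro!: cd_eqI[where n = "length gs"] simp: cd_coord_add[where n = "length gs"])
qed auto

lemma cd_mult_scalar_left:
  "x \<in> cd_carrier (length gs) \<Longrightarrow> cd_mult mu gs (cd_scalar (length gs) c) x = cd_smult c x"
  by (subst cd_scalar_eq_smult_one) (simp add: cd_mult_smult_left cd_mult_one)

lemma cd_mult_scalar_right:
  "x \<in> cd_carrier (length gs) \<Longrightarrow> cd_mult mu gs x (cd_scalar (length gs) c) = cd_smult c x"
  by (subst cd_scalar_eq_smult_one) (simp add: cd_mult_smult_right cd_mult_one)

lemma cd_conj_mult: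
  "x \<in> cd_carrier (length gs) \<Longrightarrow> y \<in> cd_carrier (length gs) \<Longrightarrow>
   cd_conj (cd_mult mu gs x y) = cd_mult mu gs (cd_conj y) (cd_conj x)"
proof (induction gs arbitrary: x y)
  case Nil then show ?case by (auto simp: algebra_simps)
next
  case (Cons g gs)
  let ?n = "length gs"
  obtain a b c d where "x = D a b" "y = D c d"
    "a \<in> cd_carrier ?n" "b \<in> cd_carrier ?n" "c \<in> cd_carrier ?n" "d \<in> cd_carrier ?n"
    using Cons.prems by auto
  with Cons.IH show ?case
    by (auto intro!: cd_eqI[where n = ?n]
        simp: cd_neg_def cd_conj_smult cd_conj_add[where n = ?n] cd_mult_smult_left
          cd_mult_smult_right cd_coord_add[where n = ?n] algebra_simps)
qed

lemma cd_sum_mult_left: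
  assumes "\<And>x. x \<in> set xs \<Longrightarrow> f x \<in> cd_carrier (length gs)" "r \<in> cd_carrier (length gs)"
  shows "cd_mult mu gs r (cd_sum (length gs) (map f xs)) =
         cd_sum (length gs) (map (\<lambda>x. cd_mult mu gs r (f x)) xs)"
  using assms
proof (induction xs)
  case (Cons a xs)
  have "cd_sum (length gs) (map f xs) \<in> cd_carrier (length gs)"
    using Cons.prems by (intro cd_sum_carrier) auto
  with Cons show ?case by (simp add: cd_sum_def cd_mult_add_right)
qed (simp add: cd_sum_def)

lemma cd_sum_mult_right:
  assumes "\<And>x. x \<in> set xs \<Longrightarrow> f x \<in> cd_carrier (length gs)" "r \<in> cd_carrier (length gs)"
  shows "cd_mult mu gs (cd_sum (length gs) (map f xs)) r =
         cd_sum (length gs) (map (\<lambda>x. cd_mult mu gs (f x) r) xs)"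
  using assms
proof (induction xs)
  case (Cons a xs)
  have "cd_sum (length gs) (map f xs) \<in> cd_carrier (length gs)"
    using Cons.prems by (intro cd_sum_carrier) auto
  with Cons show ?case by (simp add: cd_sum_def cd_mult_add_left)
qed (simp add: cd_sum_def)

section \<open>Trace, norm and polar form as field elements\<close>

fun cd_trace :: "'a::field cd \<Rightarrow> 'a" where
  "cd_trace (Q a b) = 2 * a + b"
| "cd_trace (D a b) = cd_trace a"

fun cd_normf :: "'a::field \<Rightarrow> 'a list \<Rightarrow> 'a cd \<Rightarrow> 'a" where
  "cd_normf mu [] (Q a b) = a * a + a * b - mu * (b * b)"
| "cd_normf mu (g # gs) (D a b) = cd_normf mu gs a - g * cd_normf mu gs b"
| "cd_normf _ _ _ = 0"

definition cd_polar :: "'a::field \<Rightarrow> 'a list \<Rightarrow> 'a cd \<Rightarrow> 'a cd \<Rightarrow> 'a" where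
  "cd_polar mu gs x y = cd_trace (cd_mult mu gs (cd_conj x) y)"

lemma cd_add_conj_eq_scalar: "x \<in> cd_carrier n \<Longrightarrow> cd_add x (cd_conj x) = cd_scalar n (cd_trace x)"
proof (induction n arbitrary: x)
  case (Suc n)
  then obtain a b where "x = D a b" "a \<in> cd_carrier n" "b \<in> cd_carrier n" by auto
  with Suc.IH show ?case
    by (auto intro!: cd_eqI[where n = n] simp: cd_neg_def cd_coord_add[where n = n])
qed auto

lemma cd_tr_eq_scalar: "x \<in> cd_carrier (length gs) \<Longrightarrow> cd_tr mu gs x = cd_scalar (length gs) (cd_trace x)"
  by (simp add: cd_tr_def cd_add_conj_eq_scalar)

lemma cd_trace_add:
  "x \<in> cd_carrier n \<Longrightarrow> y \<in> cd_carrier n \<Longrightarrow> cd_trace (cd_add x y) = cd_trace x + cd_trace y"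
  by (induction n arbitrary: x y) auto

lemma cd_trace_smult [simp]: "cd_trace (cd_smult c x) = c * cd_trace x"
  by (induction x) (auto simp: algebra_simps)

lemma cd_trace_conj [simp]: "x \<in> cd_carrier n \<Longrightarrow> cd_trace (cd_conj x) = cd_trace x"
  by (induction n arbitrary: x) auto

lemma cd_trace_scalar [simp]: "cd_trace (cd_scalar n c) = 2 * c"
  by (induction n arbitrary: c) auto

lemma cd_normf_smult:
  "x \<in> cd_carrier (length gs) \<Longrightarrow> cd_normf mu gs (cd_smult c x) = c * c * cd_normf mu gs x"
  by (induction gs arbitrary: x) (auto simp: algebra_simps)

lemma cd_conj_mult_self:
  "x \<in> cd_carrier (length gs) \<Longrightarrow>
   cd_mult mu gs (cd_conj x) x = cd_scalar (length gs) (cd_normf mu gs x)"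
proof (induction gs arbitrary: x)
  case (Cons g gs)
  let ?n = "length gs"
  obtain a b where x: "x = D a b" "a \<in> cd_carrier ?n" "b \<in> cd_carrier ?n"
    using Cons.prems by auto
  have "cd_mult mu gs (cd_neg b) (cd_conj a) = cd_neg (cd_mult mu gs b (cd_conj a))"
    "cd_mult mu gs (cd_conj b) (cd_neg b) = cd_neg (cd_scalar ?n (cd_normf mu gs b))"
    using x Cons.IH by (simp_all add: cd_neg_def cd_mult_smult_left cd_mult_smult_right)
  with x Cons.IH show ?case
    by (auto intro!: cd_eqI[where n = ?n] simp: cd_coord_add[where n = ?n] algebra_simps)
qed (auto simp: algebra_simps)

lemma cd_norm_eq_scalar:
  "x \<in> cd_carrier (length gs) \<Longrightarrow> cd_norm mu gs x = cd_scalar (length gs) (cd_normf mu gs x)"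
  by (simp add: cd_norm_def cd_conj_mult_self)

lemma cd_mult_self:
  assumes x: "x \<in> cd_carrier (length gs)"
  shows "cd_mult mu gs x x = cd_add (cd_smult (cd_trace x) x) (cd_scalar (length gs) (- cd_normf mu gs x))"
proof -
  let ?n = "length gs"
  have "cd_smult (cd_trace x) x = cd_mult mu gs (cd_add x (cd_conj x)) x"
    using x by (simp add: cd_add_conj_eq_scalar[where n = ?n] cd_mult_scalar_left)
  also have "\<dots> = cd_add (cd_mult mu gs x x) (cd_scalar ?n (cd_normf mu gs x))"
    using x by (simp add: cd_mult_add_left cd_conj_mult_self)
  finally have "cd_smult (cd_trace x) x = cd_add (cd_mult mu gs x x) (cd_scalar ?n (cd_normf mu gs x))" .
  from arg_cong[OF this, of "\<lambda>z. cd_coord z i" for i] show ?thesis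
    using x by (auto intro!: cd_eqI[where n = ?n] simp: cd_coord_add[where n = ?n] algebra_simps)
qed

lemma cd_normf_add:
  assumes x: "x \<in> cd_carrier (length gs)" and y: "y \<in> cd_carrier (length gs)"
  shows "cd_normf mu gs (cd_add x y) = cd_normf mu gs x + cd_normf mu gs y + cd_polar mu gs x y"
proof -
  let ?n = "length gs"
  let ?p = "cd_mult mu gs (cd_conj x) y"
  have p: "?p \<in> cd_carrier ?n" using x y by simp
  have "cd_scalar ?n (cd_normf mu gs (cd_add x y)) = cd_mult mu gs (cd_conj (cd_add x y)) (cd_add x y)"
    using x y by (simp add: cd_conj_mult_self)
  also have "\<dots> = cd_add (cd_add (cd_mult mu gs (cd_conj x) x) (cd_mult mu gs (cd_conj y) x))
                     (cd_add ?p (cd_mult mu gs (cd_conj y) y))"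
    using x y by (simp add: cd_conj_add[where n = ?n] cd_mult_add_left cd_mult_add_right)
  also have "\<dots> = cd_add (cd_add (cd_scalar ?n (cd_normf mu gs x)) (cd_conj ?p))
                     (cd_add ?p (cd_scalar ?n (cd_normf mu gs y)))"
    using x y by (simp add: cd_conj_mult_self cd_conj_mult)
  finally have "cd_coord (cd_scalar ?n (cd_normf mu gs (cd_add x y))) 0 =
      cd_normf mu gs x + cd_normf mu gs y + cd_coord (cd_add ?p (cd_conj ?p)) 0"
    using p by (simp add: cd_coord_add[where n = ?n] algebra_simps)
  then show ?thesis using p by (simp add: cd_add_conj_eq_scalar[where n = ?n] cd_polar_def)
qed

lemma cd_polar_smult_right:
  "x \<in> cd_carrier (length gs) \<Longrightarrow> y \<in> cd_carrier (length gs) \<Longrightarrow>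
   cd_polar mu gs x (cd_smult c y) = c * cd_polar mu gs x y"
  by (simp add: cd_polar_def cd_mult_smult_right)

section \<open>Elements that are not zero divisors\<close>

text \<open>From the sedenions on, \<open>n(u) \<noteq> 0\<close> no longer keeps \<open>u\<close> from being a zero divisor;
  cancellability is therefore tracked separately and propagated to \<open>(u, 0)\<close> and \<open>(0, u)\<close>.\<close>

definition cd_cancellable :: "'a::field \<Rightarrow> 'a list \<Rightarrow> 'a cd \<Rightarrow> bool" where
  "cd_cancellable mu gs u \<longleftrightarrow> u \<in> cd_carrier (length gs) \<and>
     (\<forall>b \<in> cd_carrier (length gs).
        cd_mult mu gs b u = cd_zero (length gs) \<or> cd_mult mu gs u b = cd_zero (length gs) \<longrightarrow>
        b = cd_zero (length gs))"

lemma cd_cancellable_carrier: "cd_cancellable mu gs u \<Longrightarrow> u \<in> cd_carrier (length gs)"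
  by (simp add: cd_cancellable_def)

lemma cd_cancellable_cancel_right:
  fixes b :: "'a::field cd"
  shows "cd_cancellable mu gs u \<Longrightarrow> b \<in> cd_carrier (length gs) \<Longrightarrow>
   cd_mult mu gs b u = cd_zero (length gs) \<Longrightarrow> b = cd_zero (length gs)"
  unfolding cd_cancellable_def by blast

lemma cd_cancellable_cancel_left:
  fixes b :: "'a::field cd"
  shows "cd_cancellable mu gs u \<Longrightarrow> b \<in> cd_carrier (length gs) \<Longrightarrow>
   cd_mult mu gs u b = cd_zero (length gs) \<Longrightarrow> b = cd_zero (length gs)"
  unfolding cd_cancellable_def by blast

lemma cd_cancellable_conj:
  fixes u :: "'a::field cd"
  assumes u: "cd_cancellable mu gs u"
  shows "cd_cancellable mu gs (cd_conj u)"
  unfolding cd_cancellable_def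
proof (intro conjI ballI impI)
  let ?n = "length gs"
  have uc: "u \<in> cd_carrier ?n" using u by (rule cd_cancellable_carrier)
  then show "cd_conj u \<in> cd_carrier ?n" by simp
  fix b :: "'a cd" assume b: "b \<in> cd_carrier ?n"
  assume "cd_mult mu gs b (cd_conj u) = cd_zero ?n \<or> cd_mult mu gs (cd_conj u) b = cd_zero ?n"
  moreover have "cd_conj (cd_mult mu gs b (cd_conj u)) = cd_mult mu gs u (cd_conj b)"
    "cd_conj (cd_mult mu gs (cd_conj u) b) = cd_mult mu gs (cd_conj b) u"
    using uc b by (simp_all add: cd_conj_mult)
  ultimately have "cd_mult mu gs u (cd_conj b) = cd_zero ?n \<or> cd_mult mu gs (cd_conj b) u = cd_zero ?n"
    by auto
  moreover have cb: "cd_conj b \<in> cd_carrier ?n" using b by simp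
  ultimately have "cd_conj b = cd_zero ?n"
    using cd_cancellable_cancel_left[OF u cb] cd_cancellable_cancel_right[OF u cb] by blast
  then show "b = cd_zero ?n" using b by (simp add: cd_conj_eq_zero_iff)
qed

lemma cd_cancellable_normf_nonzero:
  fixes u :: "'a::field cd"
  assumes u: "cd_cancellable mu gs u"
  shows "cd_normf mu gs u \<noteq> 0"
proof
  let ?n = "length gs"
  have uc: "u \<in> cd_carrier ?n" using u by (rule cd_cancellable_carrier)
  assume "cd_normf mu gs u = 0"
  then have "cd_mult mu gs (cd_conj u) u = cd_zero ?n" using uc by (simp add: cd_conj_mult_self)
  then have "u = cd_zero ?n"
    using u uc by (metis cd_cancellable_cancel_right cd_conj_carrier cd_conj_eq_zero_iff)
  then have "cd_mult mu gs (cd_one ?n) u = cd_zero ?n" by simp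
  then have "cd_one ?n = (cd_zero ?n :: 'a cd)"
    by (rule cd_cancellable_cancel_right[OF u cd_scalar_carrier])
  from arg_cong[OF this, of "\<lambda>x. cd_coord x 0"] show False by simp
qed

text \<open>Up to the quaternions the algebra is associative, so \<open>u\<close> has the inverse
  \<open>conj u / n(u)\<close> as soon as \<open>n(u) \<noteq> 0\<close>.\<close>

lemma cd_mult_conj_cancel_low:
  assumes "length gs \<le> 1" "u \<in> cd_carrier (length gs)" "b \<in> cd_carrier (length gs)"
  shows "cd_mult mu gs (cd_mult mu gs b u) (cd_conj u) = cd_smult (cd_normf mu gs u) b \<and>
         cd_mult mu gs (cd_conj u) (cd_mult mu gs u b) = cd_smult (cd_normf mu gs u) b"
proof (cases gs)
  case Nil
  with assms obtain x y p q where "u = Q x y" "b = Q p q" by auto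
  with Nil show ?thesis by (simp add: algebra_simps)
next
  case (Cons g gs')
  with assms have gs: "gs = [g]" by auto
  with assms obtain x1 y1 x2 y2 p1 q1 p2 q2
    where "u = D (Q x1 y1) (Q x2 y2)" "b = D (Q p1 q1) (Q p2 q2)"
    by (auto simp: numeral_2_eq_2)
  with gs show ?thesis by (simp add: cd_neg_def algebra_simps)
qed

lemma cd_cancellable_low:
  fixes u :: "'a::field cd"
  assumes "length gs \<le> 1" "u \<in> cd_carrier (length gs)" "cd_normf mu gs u \<noteq> 0"
  shows "cd_cancellable mu gs u"
  unfolding cd_cancellable_def
proof (intro conjI ballI impI)
  fix b :: "'a cd" assume b: "b \<in> cd_carrier (length gs)"
  assume "cd_mult mu gs b u = cd_zero (length gs) \<or> cd_mult mu gs u b = cd_zero (length gs)"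
  then have "cd_smult (cd_normf mu gs u) b = cd_zero (length gs)"
    using cd_mult_conj_cancel_low[OF assms(1,2) b, of mu] assms(2) by auto
  then show "b = cd_zero (length gs)" using b assms(3) by (simp add: cd_smult_eq_zero_iff)
qed (fact assms(2))

lemma cd_cancellable_D_left:
  fixes u :: "'a::field cd"
  assumes u: "cd_cancellable mu gs u"
  shows "cd_cancellable mu (g # gs) (D u (cd_zero (length gs)))"
  unfolding cd_cancellable_def
proof (intro conjI ballI impI)
  let ?n = "length gs"
  have uc: "u \<in> cd_carrier ?n" using u by (rule cd_cancellable_carrier)
  then show "D u (cd_zero ?n) \<in> cd_carrier (length (g # gs))" by simp
  fix b :: "'a cd" assume "b \<in> cd_carrier (length (g # gs))"
  then obtain b1 b2 where b: "b = D b1 b2" "b1 \<in> cd_carrier ?n" "b2 \<in> cd_carrier ?n" by auto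
  assume "cd_mult mu (g # gs) b (D u (cd_zero ?n)) = cd_zero (length (g # gs)) \<or>
          cd_mult mu (g # gs) (D u (cd_zero ?n)) b = cd_zero (length (g # gs))"
  then have "(cd_mult mu gs b1 u = cd_zero ?n \<and> cd_mult mu gs b2 (cd_conj u) = cd_zero ?n) \<or>
             (cd_mult mu gs u b1 = cd_zero ?n \<and> cd_mult mu gs b2 u = cd_zero ?n)"
    using b uc by auto
  then show "b = cd_zero (length (g # gs))"
    using b u cd_cancellable_conj[OF u]
    by (auto dest: cd_cancellable_cancel_left cd_cancellable_cancel_right)
qed

lemma cd_cancellable_D_right:
  fixes u :: "'a::field cd"
  assumes u: "cd_cancellable mu gs u" and g: "g \<noteq> 0"
  shows "cd_cancellable mu (g # gs) (D (cd_zero (length gs)) u)"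
  unfolding cd_cancellable_def
proof (intro conjI ballI impI)
  let ?n = "length gs"
  have uc: "u \<in> cd_carrier ?n" using u by (rule cd_cancellable_carrier)
  then show "D (cd_zero ?n) u \<in> cd_carrier (length (g # gs))" by simp
  fix b :: "'a cd" assume "b \<in> cd_carrier (length (g # gs))"
  then obtain b1 b2 where b: "b = D b1 b2" "b1 \<in> cd_carrier ?n" "b2 \<in> cd_carrier ?n" by auto
  assume "cd_mult mu (g # gs) b (D (cd_zero ?n) u) = cd_zero (length (g # gs)) \<or>
          cd_mult mu (g # gs) (D (cd_zero ?n) u) b = cd_zero (length (g # gs))"
  then have "(cd_mult mu gs (cd_conj u) b2 = cd_zero ?n \<and> cd_mult mu gs u b1 = cd_zero ?n) \<or>
             (cd_mult mu gs (cd_conj b2) u = cd_zero ?n \<and> cd_mult mu gs u (cd_conj b1) = cd_zero ?n)"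
    using b uc g by (auto simp: cd_smult_eq_zero_iff)
  then have "(b1 = cd_zero ?n \<and> b2 = cd_zero ?n) \<or>
             (cd_conj b1 = cd_zero ?n \<and> cd_conj b2 = cd_zero ?n)"
    using b u cd_cancellable_conj[OF u]
    by (meson cd_cancellable_cancel_left cd_cancellable_cancel_right cd_conj_carrier)
  then show "b = cd_zero (length (g # gs))" using b by (auto simp: cd_conj_eq_zero_iff)
qed

section \<open>Cancellable trace-zero directions\<close>

lemma cd_polar_commute:
  assumes "x \<in> cd_carrier (length gs)" "y \<in> cd_carrier (length gs)"
  shows "cd_polar mu gs x y = cd_polar mu gs y x"
proof -
  have "cd_conj (cd_mult mu gs (cd_conj x) y) = cd_mult mu gs (cd_conj y) x"
    using assms by (simp add: cd_conj_mult)
  then show ?thesis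
    using assms cd_trace_conj[of "cd_mult mu gs (cd_conj x) y" "length gs"]
    by (simp add: cd_polar_def)
qed

lemma cd_polar_D_zero_right:
  assumes "a \<in> cd_carrier (length gs)" "b \<in> cd_carrier (length gs)" "u \<in> cd_carrier (length gs)"
  shows "cd_polar mu (g # gs) (D a b) (D u (cd_zero (length gs))) = cd_polar mu gs a u"
  using assms by (simp add: cd_polar_def cd_trace_add[where n = "length gs"])

lemma cd_polar_D_zero_left:
  assumes "a \<in> cd_carrier (length gs)" "b \<in> cd_carrier (length gs)" "u \<in> cd_carrier (length gs)"
  shows "cd_polar mu (g # gs) (D a b) (D (cd_zero (length gs)) u) = - g * cd_polar mu gs b u"
  using assms cd_polar_commute[of u gs b mu]
  by (simp add: cd_polar_def cd_trace_add[where n = "length gs"] cd_mult_smult_right cd_neg_def)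

lemma cd_polar_witness_lift_left:
  assumes z: "cd_cancellable mu gs z" "cd_polar mu gs b1 z \<noteq> 0"
    and b: "b1 \<in> cd_carrier (length gs)" "b2 \<in> cd_carrier (length gs)"
  shows "cd_cancellable mu (g # gs) (D z (cd_zero (length gs))) \<and>
         cd_polar mu (g # gs) (D b1 b2) (D z (cd_zero (length gs))) \<noteq> 0"
  using cd_cancellable_D_left[OF z(1)] z cd_polar_D_zero_right[OF b cd_cancellable_carrier[OF z(1)]]
  by simp

lemma cd_polar_witness_lift_right:
  assumes z: "cd_cancellable mu gs z" "cd_polar mu gs b2 z \<noteq> 0" and "g \<noteq> 0"
    and b: "b1 \<in> cd_carrier (length gs)" "b2 \<in> cd_carrier (length gs)"
  shows "cd_cancellable mu (g # gs) (D (cd_zero (length gs)) z) \<and>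
         cd_polar mu (g # gs) (D b1 b2) (D (cd_zero (length gs)) z) \<noteq> 0"
  using cd_cancellable_D_right[OF z(1) \<open>g \<noteq> 0\<close>] z \<open>g \<noteq> 0\<close>
    cd_polar_D_zero_left[OF b cd_cancellable_carrier[OF z(1)]]
  by simp

lemma cd_trace_zero_witness_base:
  fixes mu :: "'a::field"
  assumes "4 * mu + 1 \<noteq> 0" "y \<noteq> 0"
  shows "cd_normf mu [] (Q (-y) (2 * y)) \<noteq> 0 \<and> cd_trace (Q (-y) (2 * y)) = 0 \<and>
         cd_polar mu [] (Q x y) (Q (-y) (2 * y)) \<noteq> 0"
proof -
  have "cd_normf mu [] (Q (-y) (2 * y)) = - (y * y * (4 * mu + 1))"
    "cd_polar mu [] (Q x y) (Q (-y) (2 * y)) = - (y * y * (4 * mu + 1))"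
    by (simp_all add: cd_polar_def algebra_simps)
  with assms show ?thesis by simp
qed

text \<open>The case \<open>char F = 2\<close>, \<open>\<mu> = 0\<close>, \<open>tr b = 0\<close> must be excluded: then \<open>A\<^sub>1 \<cong> F \<times> F\<close>,
  \<open>b\<close> is a nonzero scalar, and over \<open>F\<^sub>2\<close> the only unit of \<open>A\<^sub>1\<close> is \<open>1\<close>, with \<open>tr(conj b) = 0\<close>.
  In that case the witnesses are found one doubling higher.\<close>

lemma cd_polar_witness_base:
  fixes mu :: "'a::field"
  assumes mu: "4 * mu + 1 \<noteq> 0" and b: "b \<in> cd_carrier 0" "b \<noteq> cd_zero 0"
    and nondeg: "\<not> ((2::'a) = 0 \<and> mu = 0 \<and> cd_trace b = 0)"
  shows "\<exists>z \<in> cd_carrier 0. cd_normf mu [] z \<noteq> 0 \<and> cd_polar mu [] b z \<noteq> 0"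
proof -
  obtain p q where pq: "b = Q p q" using b(1) by auto
  consider "cd_trace b \<noteq> 0" | "cd_trace b = 0" "mu \<noteq> 0" | "cd_trace b = 0" "mu = 0" "(2::'a) \<noteq> 0"
    using nondeg by blast
  then show ?thesis
  proof cases
    case 1
    then show ?thesis using pq by (intro bexI[of _ "Q 1 0"]) (auto simp: cd_polar_def algebra_simps)
  next
    case 2
    then have "q = - 2 * p" "p \<noteq> 0" using pq b(2) by (auto simp: algebra_simps eq_neg_iff_add_eq_0)
    moreover have "p * (4 * mu + 1) \<noteq> 0" using \<open>p \<noteq> 0\<close> mu by simp
    ultimately show ?thesis using pq 2 by (intro bexI[of _ "Q 0 1"]) (auto simp: cd_polar_def algebra_simps)
  next
    case 3
    then have "q = - 2 * p" "p \<noteq> 0" using pq b(2) by (auto simp: algebra_simps eq_neg_iff_add_eq_0)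
    then show ?thesis using pq 3 by (intro bexI[of _ "Q 1 1"]) (auto simp: cd_polar_def algebra_simps)
  qed
qed

lemma cd_polar_witness_char_two:
  fixes mu :: "'a::field"
  assumes "(2::'a) = 0" "mu = 0" "g \<noteq> 0"
    and b: "b1 \<in> cd_carrier 0" "b2 \<in> cd_carrier 0" "D b1 b2 \<noteq> cd_zero 1"
    and tr: "cd_trace b1 = 0" "cd_trace b2 = 0"
  shows "\<exists>z \<in> cd_carrier 1. cd_normf mu [g] z \<noteq> 0 \<and> cd_polar mu [g] (D b1 b2) z \<noteq> 0"
proof -
  obtain p1 q1 p2 q2 where pq: "b1 = Q p1 q1" "b2 = Q p2 q2" using b by auto
  have q: "q1 = 0" "q2 = 0" using tr pq assms(1) by simp_all
  show ?thesis
  proof (cases "p1 = 0")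
    case False
    then show ?thesis using pq q assms
      by (intro bexI[of _ "D (Q 0 1) (Q 1 0)"]) (auto simp: cd_polar_def cd_neg_def numeral_2_eq_2)
  next
    case True
    then have "p2 \<noteq> 0" using b(3) pq q by (auto simp: numeral_2_eq_2)
    then show ?thesis using pq q True assms
      by (intro bexI[of _ "D (Q 1 0) (Q 0 1)"]) (auto simp: cd_polar_def cd_neg_def numeral_2_eq_2)
  qed
qed

lemma cd_trace_zero_witness_char_two:
  fixes mu :: "'a::field"
  assumes "(2::'a) = 0" "mu = 0" "g \<noteq> 0"
    and b: "b \<in> cd_carrier 0" "b \<noteq> cd_zero 0" "cd_trace b = 0"
  shows "\<exists>u \<in> cd_carrier 1. cd_normf mu [g] u \<noteq> 0 \<and> cd_trace u = 0 \<and>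
           cd_polar mu [g] (D (cd_scalar 0 c) b) u \<noteq> 0"
proof -
  obtain p q where pq: "b = Q p q" using b by auto
  then have "q = 0" "p \<noteq> 0" using b assms(1) by auto
  then show ?thesis using pq assms
    by (intro bexI[of _ "D (Q 1 0) (Q 0 1)"]) (auto simp: cd_polar_def cd_neg_def numeral_2_eq_2)
qed

lemma cd_valid_Cons [simp]: "cd_valid mu (g # gs) \<longleftrightarrow> g \<noteq> 0 \<and> cd_valid mu gs"
  by (auto simp: cd_valid_def)

lemma cd_polar_witness:
  fixes mu :: "'a::field"
  assumes "cd_valid mu gs" "b \<in> cd_carrier (length gs)" "b \<noteq> cd_zero (length gs)"
    and "gs = [] \<Longrightarrow> \<not> ((2::'a) = 0 \<and> mu = 0 \<and> cd_trace b = 0)"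
  shows "\<exists>z. cd_cancellable mu gs z \<and> cd_polar mu gs b z \<noteq> 0"
  using assms
proof (induction gs arbitrary: b)
  case Nil
  then obtain z where "z \<in> cd_carrier 0" "cd_normf mu [] z \<noteq> 0" "cd_polar mu [] b z \<noteq> 0"
    using cd_polar_witness_base[of mu b] by (auto simp: cd_valid_def)
  then show ?case using cd_cancellable_low[of "[]" z mu] by auto
next
  case (Cons g gs)
  let ?n = "length gs"
  obtain b1 b2 where b: "b = D b1 b2" "b1 \<in> cd_carrier ?n" "b2 \<in> cd_carrier ?n"
    using Cons.prems(2) by auto
  have g: "g \<noteq> 0" and valid: "cd_valid mu gs" using Cons.prems(1) by auto
  let ?ok = "\<lambda>c. c \<noteq> cd_zero ?n \<and> (gs = [] \<longrightarrow> \<not> ((2::'a) = 0 \<and> mu = 0 \<and> cd_trace c = 0))"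
  consider "?ok b1" | "?ok b2"
    | "gs = []" "(2::'a) = 0" "mu = 0" "cd_trace b1 = 0" "cd_trace b2 = 0"
    using Cons.prems(3) b by fastforce
  then show ?case
  proof cases
    case 1
    then obtain z where "cd_cancellable mu gs z" "cd_polar mu gs b1 z \<noteq> 0"
      using Cons.IH[OF valid b(2)] by blast
    then show ?thesis using cd_polar_witness_lift_left[where g = g, OF _ _ b(2,3)] b(1) by blast
  next
    case 2
    then obtain z where "cd_cancellable mu gs z" "cd_polar mu gs b2 z \<noteq> 0"
      using Cons.IH[OF valid b(3)] by blast
    then show ?thesis using cd_polar_witness_lift_right[OF _ _ g b(2,3)] b(1) by blast
  next
    case 3
    have "b1 \<in> cd_carrier 0" "b2 \<in> cd_carrier 0" "D b1 b2 \<noteq> cd_zero 1"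
      using b Cons.prems(3) 3(1) by simp_all
    then obtain z where z: "z \<in> cd_carrier 1" "cd_normf mu [g] z \<noteq> 0" "cd_polar mu [g] b z \<noteq> 0"
      using cd_polar_witness_char_two[OF 3(2,3) g _ _ _ 3(4,5)] b(1) by blast
    have "cd_cancellable mu [g] z" using z by (intro cd_cancellable_low) simp_all
    then show ?thesis using z(3) 3(1) by blast
  qed
qed

lemma cd_trace_zero_witness:
  fixes mu :: "'a::field"
  assumes "cd_valid mu gs" "l \<in> cd_carrier (length gs)" "\<not> cd_is_scalar gs l"
  shows "\<exists>u. cd_cancellable mu gs u \<and> cd_trace u = 0 \<and> cd_polar mu gs l u \<noteq> 0"
  using assms
proof (induction gs arbitrary: l)
  case Nil
  then obtain x y where l: "l = Q x y" and "y \<noteq> 0" by (auto simp: cd_is_scalar_def)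
  with Nil.prems(1) have "cd_normf mu [] (Q (-y) (2 * y)) \<noteq> 0 \<and> cd_trace (Q (-y) (2 * y)) = 0 \<and>
      cd_polar mu [] l (Q (-y) (2 * y)) \<noteq> 0"
    using cd_trace_zero_witness_base[of mu y x] by (simp add: cd_valid_def)
  then show ?case using cd_cancellable_low[of "[]" "Q (-y) (2 * y)" mu] by auto
next
  case (Cons g gs)
  let ?n = "length gs"
  obtain a b where l: "l = D a b" "a \<in> cd_carrier ?n" "b \<in> cd_carrier ?n"
    using Cons.prems(2) by auto
  have g: "g \<noteq> 0" and valid: "cd_valid mu gs" using Cons.prems(1) by auto
  show ?case
  proof (cases "cd_is_scalar gs a")
    case False
    then obtain u where "cd_cancellable mu gs u" "cd_trace u = 0" "cd_polar mu gs a u \<noteq> 0"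
      using Cons.IH[OF valid l(2)] by blast
    then show ?thesis
      using cd_polar_witness_lift_left[where g = g, OF _ _ l(2,3)] l(1)
      by (intro exI[of _ "D u (cd_zero ?n)"]) auto
  next
    case True
    then obtain c where a: "a = cd_scalar ?n c" by (auto simp: cd_is_scalar_def)
    with Cons.prems(3) l have b0: "b \<noteq> cd_zero ?n" by (auto simp: cd_is_scalar_def)
    show ?thesis
    proof (cases "gs = [] \<and> (2::'a) = 0 \<and> mu = 0 \<and> cd_trace b = 0")
      case False
      then obtain z where "cd_cancellable mu gs z" "cd_polar mu gs b z \<noteq> 0"
        using cd_polar_witness[OF valid l(3) b0] by blast
      then show ?thesis
        using cd_polar_witness_lift_right[OF _ _ g l(2,3)] l(1)
        by (intro exI[of _ "D (cd_zero ?n) z"]) auto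
    next
      case True
      have "b \<in> cd_carrier 0" "b \<noteq> cd_zero 0" "l = D (cd_scalar 0 c) b"
        using l a b0 True by simp_all
      then obtain u where u: "u \<in> cd_carrier 1" "cd_normf mu [g] u \<noteq> 0" "cd_trace u = 0"
          "cd_polar mu [g] l u \<noteq> 0"
        using cd_trace_zero_witness_char_two[of mu g b c] True g by blast
      have "cd_cancellable mu [g] u" using u by (intro cd_cancellable_low) simp_all
      then show ?thesis using u(3,4) True by blast
    qed
  qed
qed

section \<open>Evaluation at a root of a central quadratic\<close>

text \<open>\<open>x\<^sup>k \<equiv> xrem1 t N k \<cdot> x + xrem0 t N k\<close> modulo \<open>x\<^sup>2 - t x + N\<close>.\<close>

fun xpow_rem :: "'a::comm_ring_1 \<Rightarrow> 'a \<Rightarrow> nat \<Rightarrow> 'a \<times> 'a" where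
  "xpow_rem t N 0 = (0, 1)"
| "xpow_rem t N (Suc k) =
     (t * fst (xpow_rem t N k) + snd (xpow_rem t N k), - N * fst (xpow_rem t N k))"

abbreviation xrem1 :: "'a::comm_ring_1 \<Rightarrow> 'a \<Rightarrow> nat \<Rightarrow> 'a" where
  "xrem1 t N k \<equiv> fst (xpow_rem t N k)"

abbreviation xrem0 :: "'a::comm_ring_1 \<Rightarrow> 'a \<Rightarrow> nat \<Rightarrow> 'a" where
  "xrem0 t N k \<equiv> snd (xpow_rem t N k)"

lemma xpow_rem_add:
  "xrem1 t N (i + j) = (t * xrem1 t N i + xrem0 t N i) * xrem1 t N j + xrem1 t N i * xrem0 t N j \<and>
   xrem0 t N (i + j) = xrem0 t N i * xrem0 t N j - N * xrem1 t N i * xrem1 t N j"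
  by (induction i) (auto simp: algebra_simps)

definition cd_lincomb :: "nat \<Rightarrow> (nat \<Rightarrow> 'a::field) \<Rightarrow> 'a cd list \<Rightarrow> 'a cd" where
  "cd_lincomb n w fs = cd_sum n (map (\<lambda>k. cd_smult (w k) (fs ! k)) [0..<length fs])"

lemma cd_lincomb_carrier [simp, intro]:
  "\<forall>a \<in> set fs. a \<in> cd_carrier n \<Longrightarrow> cd_lincomb n w fs \<in> cd_carrier n"
  unfolding cd_lincomb_def by (intro cd_sum_carrier) auto

lemma cd_coord_lincomb:
  "\<forall>a \<in> set fs. a \<in> cd_carrier n \<Longrightarrow>
   cd_coord (cd_lincomb n w fs) i = (\<Sum>k\<leftarrow>[0..<length fs]. w k * cd_coord (fs ! k) i)"
  unfolding cd_lincomb_def by (subst cd_coord_sum[where n = n]) auto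

lemma cd_coord_mult_lincomb:
  assumes "\<forall>a \<in> set fs. a \<in> cd_carrier (length gs)" "r \<in> cd_carrier (length gs)"
  shows "cd_coord (cd_mult mu gs r (cd_lincomb (length gs) w fs)) i =
         (\<Sum>k\<leftarrow>[0..<length fs]. w k * cd_coord (cd_mult mu gs r (fs ! k)) i)"
  unfolding cd_lincomb_def using assms
  by (subst cd_sum_mult_left, force, simp, subst cd_coord_sum[where n = "length gs"])
     (auto simp: cd_mult_smult_right nth_mem intro!: arg_cong[where f = sum_list] map_cong)

lemma cd_coord_lincomb_mult:
  assumes "\<forall>a \<in> set fs. a \<in> cd_carrier (length gs)" "r \<in> cd_carrier (length gs)"
  shows "cd_coord (cd_mult mu gs (cd_lincomb (length gs) w fs) r) i =
         (\<Sum>k\<leftarrow>[0..<length fs]. w k * cd_coord (cd_mult mu gs (fs ! k) r) i)"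
  unfolding cd_lincomb_def using assms
  by (subst cd_sum_mult_right, force, simp, subst cd_coord_sum[where n = "length gs"])
     (auto simp: cd_mult_smult_left nth_mem intro!: arg_cong[where f = sum_list] map_cong)

lemma cd_lincomb_linear:
  assumes "\<forall>a \<in> set fs. a \<in> cd_carrier n"
  shows "cd_lincomb n (\<lambda>k. A * u k + B * v k) fs =
         cd_add (cd_smult A (cd_lincomb n u fs)) (cd_smult B (cd_lincomb n v fs))"
  using assms
  by (auto intro!: cd_eqI[where n = n]
      simp: cd_coord_add[where n = n] cd_coord_lincomb algebra_simps sum_list_addf sum_list_const_mult)

lemma cd_pow_quadratic:
  assumes r: "r \<in> cd_carrier (length gs)"
    and rr: "cd_mult mu gs r r = cd_add (cd_smult t r) (cd_scalar (length gs) (- N))"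
  shows "cd_pow mu gs r k = cd_add (cd_smult (xrem1 t N k) r) (cd_scalar (length gs) (xrem0 t N k))"
proof (induction k)
  case 0
  show ?case using r by (auto intro!: cd_eqI[where n = "length gs"] simp: cd_coord_add[where n = "length gs"])
next
  case (Suc k)
  have "cd_pow mu gs r (Suc k) =
      cd_mult mu gs r (cd_add (cd_smult (xrem1 t N k) r) (cd_scalar (length gs) (xrem0 t N k)))"
    using Suc by simp
  also have "\<dots> = cd_add (cd_smult (xrem1 t N k) (cd_mult mu gs r r)) (cd_smult (xrem0 t N k) r)"
    using r by (simp add: cd_mult_add_right cd_mult_smult_right cd_mult_scalar_right)
  also have "\<dots> = cd_add (cd_smult (xrem1 t N (Suc k)) r) (cd_scalar (length gs) (xrem0 t N (Suc k)))"
    using r rr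
    by (auto intro!: cd_eqI[where n = "length gs"] simp: cd_coord_add[where n = "length gs"] algebra_simps)
  finally show ?case .
qed

lemma cd_poly_eval_quadratic:
  assumes fs: "\<forall>a \<in> set fs. a \<in> cd_carrier (length gs)"
    and r: "r \<in> cd_carrier (length gs)"
    and rr: "cd_mult mu gs r r = cd_add (cd_smult t r) (cd_scalar (length gs) (- N))"
  shows "cd_poly_eval mu gs fs r =
         cd_add (cd_mult mu gs (cd_lincomb (length gs) (xrem1 t N) fs) r)
                (cd_lincomb (length gs) (xrem0 t N) fs)"
proof (rule cd_eqI[where n = "length gs"])
  let ?n = "length gs"
  have fk: "fs ! k \<in> cd_carrier ?n" if "k < length fs" for k using fs that by auto
  fix i
  have "cd_coord (cd_poly_eval mu gs fs r) i =
      (\<Sum>k\<leftarrow>[0..<length fs]. cd_coord (cd_mult mu gs (fs ! k) (cd_pow mu gs r k)) i)"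
    unfolding cd_poly_eval_def using fk r by (subst cd_coord_sum[where n = ?n]) auto
  also have "\<dots> = (\<Sum>k\<leftarrow>[0..<length fs].
      xrem1 t N k * cd_coord (cd_mult mu gs (fs ! k) r) i + xrem0 t N k * cd_coord (fs ! k) i)"
    using fk r
    by (intro arg_cong[where f = sum_list] map_cong)
       (auto simp: cd_pow_quadratic[OF r rr] cd_mult_add_right cd_mult_smult_right
          cd_mult_scalar_right cd_coord_add[where n = ?n])
  also have "\<dots> = (\<Sum>k\<leftarrow>[0..<length fs]. xrem1 t N k * cd_coord (cd_mult mu gs (fs ! k) r) i) +
                   (\<Sum>k\<leftarrow>[0..<length fs]. xrem0 t N k * cd_coord (fs ! k) i)"
    by (simp add: sum_list_addf)
  also have "(\<Sum>k\<leftarrow>[0..<length fs]. xrem1 t N k * cd_coord (cd_mult mu gs (fs ! k) r) i) =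
      cd_coord (cd_mult mu gs (cd_lincomb ?n (xrem1 t N) fs) r) i"
    using fs r by (simp add: cd_coord_lincomb_mult)
  also have "(\<Sum>k\<leftarrow>[0..<length fs]. xrem0 t N k * cd_coord (fs ! k) i) =
      cd_coord (cd_lincomb ?n (xrem0 t N) fs) i"
    using fs by (simp add: cd_coord_lincomb)
  finally show "cd_coord (cd_poly_eval mu gs fs r) i = cd_coord (cd_add
      (cd_mult mu gs (cd_lincomb ?n (xrem1 t N) fs) r) (cd_lincomb ?n (xrem0 t N) fs)) i"
    using fs r by (simp add: cd_coord_add[where n = ?n])
qed (use fs r in \<open>auto simp: cd_poly_eval_def intro!: cd_sum_carrier\<close>)

section \<open>Spherical roots\<close>

lemma cd_charpoly_eval_eq_zeroI:
  assumes l: "l \<in> cd_carrier (length gs)" and r: "r \<in> cd_carrier (length gs)"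
    and rr: "cd_mult mu gs r r =
             cd_add (cd_smult (cd_trace l) r) (cd_scalar (length gs) (- cd_normf mu gs l))"
  shows "cd_charpoly_eval mu gs l r = cd_zero (length gs)"
proof -
  let ?n = "length gs"
  have "cd_charpoly_eval mu gs l r =
      cd_add (cd_sub (cd_mult mu gs r r) (cd_smult (cd_trace l) r)) (cd_scalar ?n (cd_normf mu gs l))"
    unfolding cd_charpoly_eval_def using l r
    by (simp add: numeral_2_eq_2 cd_tr_eq_scalar cd_norm_eq_scalar cd_mult_scalar_left cd_mult_one)
  then show ?thesis
    unfolding rr using l r
    by (auto intro!: cd_eqI[where n = ?n] simp: cd_coord_add[where n = ?n] cd_coord_sub[where n = ?n])
qed

lemma cd_sphere_second_point:
  assumes l: "l \<in> cd_carrier (length gs)" and u: "u \<in> cd_carrier (length gs)"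
    and tr: "cd_trace u = 0" and nu: "cd_normf mu gs u \<noteq> 0"
  defines "\<tau> \<equiv> - cd_polar mu gs l u / cd_normf mu gs u"
  shows "cd_trace (cd_add l (cd_smult \<tau> u)) = cd_trace l"
    and "cd_normf mu gs (cd_add l (cd_smult \<tau> u)) = cd_normf mu gs l"
proof -
  show "cd_trace (cd_add l (cd_smult \<tau> u)) = cd_trace l"
    using l u tr by (simp add: cd_trace_add[where n = "length gs"])
  have "cd_normf mu gs (cd_add l (cd_smult \<tau> u)) =
      cd_normf mu gs l + \<tau> * (\<tau> * cd_normf mu gs u + cd_polar mu gs l u)"
    using l u by (simp add: cd_normf_add cd_normf_smult cd_polar_smult_right algebra_simps)
  also have "\<tau> * cd_normf mu gs u + cd_polar mu gs l u = 0"
    using nu by (simp add: \<tau>_def)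
  finally show "cd_normf mu gs (cd_add l (cd_smult \<tau> u)) = cd_normf mu gs l" by simp
qed

lemma cd_affine_zeros_eq_zero:
  assumes a: "a \<in> cd_carrier (length gs)" and b: "b \<in> cd_carrier (length gs)"
    and l: "l \<in> cd_carrier (length gs)" and u: "cd_cancellable mu gs u" and "\<tau> \<noteq> 0"
    and zero_l: "cd_add (cd_mult mu gs a l) b = cd_zero (length gs)"
    and zero_r: "cd_add (cd_mult mu gs a (cd_add l (cd_smult \<tau> u))) b = cd_zero (length gs)"
  shows "a = cd_zero (length gs) \<and> b = cd_zero (length gs)"
proof -
  let ?n = "length gs"
  have uc: "u \<in> cd_carrier ?n" using u by (rule cd_cancellable_carrier)
  have "cd_add (cd_mult mu gs a (cd_add l (cd_smult \<tau> u))) b =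
      cd_add (cd_add (cd_mult mu gs a l) b) (cd_smult \<tau> (cd_mult mu gs a u))"
    using a b l uc
    by (auto intro!: cd_eqI[where n = ?n]
        simp: cd_mult_add_right cd_mult_smult_right cd_coord_add[where n = ?n])
  then have "cd_smult \<tau> (cd_mult mu gs a u) = cd_zero ?n"
    using zero_l zero_r a uc by simp
  then have "cd_mult mu gs a u = cd_zero ?n"
    using \<open>\<tau> \<noteq> 0\<close> a uc by (simp add: cd_smult_eq_zero_iff)
  then have "a = cd_zero ?n" using cd_cancellable_cancel_right[OF u a] by blast
  with zero_l b l show ?thesis by simp
qed

lemma cd_spherical_root_rem_zero:
  assumes valid: "cd_valid mu gs" and fs: "\<forall>a \<in> set fs. a \<in> cd_carrier (length gs)"
    and sph: "cd_spherical_root mu gs fs l"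
  shows "cd_lincomb (length gs) (xrem1 (cd_trace l) (cd_normf mu gs l)) fs = cd_zero (length gs) \<and>
         cd_lincomb (length gs) (xrem0 (cd_trace l) (cd_normf mu gs l)) fs = cd_zero (length gs)"
proof -
  let ?n = "length gs" and ?t = "cd_trace l" and ?N = "cd_normf mu gs l"
  have l: "l \<in> cd_carrier ?n" and "\<not> cd_is_scalar gs l"
    and root: "cd_poly_eval mu gs fs l = cd_zero ?n"
    and sphere: "\<And>r. r \<in> cd_carrier ?n \<Longrightarrow> cd_charpoly_eval mu gs l r = cd_zero ?n \<Longrightarrow>
                   cd_poly_eval mu gs fs r = cd_zero ?n"
    using sph unfolding cd_spherical_root_def by auto
  then obtain u where u: "cd_cancellable mu gs u" "cd_trace u = 0" "cd_polar mu gs l u \<noteq> 0"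
    using cd_trace_zero_witness[OF valid] by blast
  have uc: "u \<in> cd_carrier ?n" and nu: "cd_normf mu gs u \<noteq> 0"
    using u(1) by (simp_all add: cd_cancellable_carrier cd_cancellable_normf_nonzero)
  define \<tau> where "\<tau> = - cd_polar mu gs l u / cd_normf mu gs u"
  define r where "r = cd_add l (cd_smult \<tau> u)"
  have r: "r \<in> cd_carrier ?n" using l uc by (simp add: r_def)
  have \<tau>: "\<tau> \<noteq> 0" using u(3) nu by (simp add: \<tau>_def)
  have ll: "cd_mult mu gs l l = cd_add (cd_smult ?t l) (cd_scalar ?n (- ?N))"
    using cd_mult_self[OF l] .
  have "cd_trace r = ?t" "cd_normf mu gs r = ?N"
    using cd_sphere_second_point[OF l uc u(2) nu] by (simp_all add: r_def \<tau>_def)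
  then have rr: "cd_mult mu gs r r = cd_add (cd_smult ?t r) (cd_scalar ?n (- ?N))"
    using cd_mult_self[OF r, of mu] by simp
  let ?\<alpha> = "cd_lincomb ?n (xrem1 ?t ?N) fs" and ?\<beta> = "cd_lincomb ?n (xrem0 ?t ?N) fs"
  have "cd_add (cd_mult mu gs ?\<alpha> l) ?\<beta> = cd_zero ?n"
    using cd_poly_eval_quadratic[OF fs l ll] root by simp
  moreover have "cd_add (cd_mult mu gs ?\<alpha> r) ?\<beta> = cd_zero ?n"
    using cd_poly_eval_quadratic[OF fs r rr] sphere[OF r cd_charpoly_eval_eq_zeroI[OF l r rr]] by simp
  moreover have "?\<alpha> \<in> cd_carrier ?n" "?\<beta> \<in> cd_carrier ?n" using fs by auto
  ultimately show ?thesis using cd_affine_zeros_eq_zero[OF _ _ l u(1) \<tau>, folded r_def] by blast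
qed

section \<open>The companion polynomial\<close>

lemma sum_list_convolution:
  fixes F :: "nat \<Rightarrow> 'a::semiring_0"
  shows "(\<Sum>m\<leftarrow>[0..<2 * L]. F m * (\<Sum>j\<leftarrow>filter (\<lambda>j. j < L \<and> m - j < L) [0..<Suc m]. P j (m - j))) =
         (\<Sum>j\<leftarrow>[0..<L]. \<Sum>k\<leftarrow>[0..<L]. F (j + k) * P j k)"
proof -
  have "(\<Sum>m\<leftarrow>[0..<2 * L]. F m * (\<Sum>j\<leftarrow>filter (\<lambda>j. j < L \<and> m - j < L) [0..<Suc m]. P j (m - j))) =
      (\<Sum>m\<in>{0..<2 * L}. \<Sum>j\<in>{j. j < Suc m \<and> j < L \<and> m - j < L}. F m * P j (m - j))"
    by (simp add: interv_sum_list_conv_sum_set_nat sum_list_distinct_conv_sum_set sum_distrib_left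
        del: upt_Suc cong: conj_cong)
  also have "\<dots> = (\<Sum>(m, j)\<in>(SIGMA m:{0..<2 * L}. {j. j < Suc m \<and> j < L \<and> m - j < L}). F m * P j (m - j))"
    by (rule sum.Sigma) auto
  also have "\<dots> = (\<Sum>(j, k)\<in>{0..<L} \<times> {0..<L}. F (j + k) * P j k)"
    by (rule sum.reindex_bij_witness[where i = "\<lambda>(j, k). (j + k, j)" and j = "\<lambda>(m, j). (j, m - j)"])
      auto
  also have "\<dots> = (\<Sum>j\<leftarrow>[0..<L]. \<Sum>k\<leftarrow>[0..<L]. F (j + k) * P j k)"
    by (simp add: interv_sum_list_conv_sum_set_nat sum.cartesian_product)
  finally show ?thesis .
qed

lemma cd_sum_zeros: "cd_sum n (map (\<lambda>x. cd_zero n) xs) = cd_zero n"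
  by (induction xs) (simp_all add: cd_sum_def)

lemma cd_lincomb_companion:
  assumes fs: "\<forall>a \<in> set fs. a \<in> cd_carrier (length gs)"
  shows "cd_lincomb (length gs) W (cd_companion mu gs fs) =
         cd_sum (length gs) (map (\<lambda>j. cd_mult mu gs (cd_conj (fs ! j))
                                     (cd_lincomb (length gs) (\<lambda>k. W (j + k)) fs)) [0..<length fs])"
proof -
  let ?n = "length gs" and ?L = "length fs"
  define c where "c m = cd_sum ?n (map (\<lambda>i. cd_mult mu gs (cd_conj (fs ! i)) (fs ! (m - i)))
                          (filter (\<lambda>i. i < ?L \<and> m - i < ?L) [0..<Suc m]))" for m
  have fk: "fs ! k \<in> cd_carrier ?n" if "k < ?L" for k using fs that by auto
  have C: "cd_companion mu gs fs = map c [0..<2 * ?L]" by (simp add: cd_companion_def c_def)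
  have c: "c m \<in> cd_carrier ?n" for m
    unfolding c_def using fk by (intro cd_sum_carrier) (auto simp del: upt_Suc)
  show ?thesis
  proof (rule cd_eqI[where n = ?n])
    fix i
    define P where "P j k = cd_coord (cd_mult mu gs (cd_conj (fs ! j)) (fs ! k)) i" for j k
    have "cd_coord (cd_lincomb ?n W (cd_companion mu gs fs)) i =
        (\<Sum>m\<leftarrow>[0..<2 * ?L]. W m * cd_coord (c m) i)"
      using c by (auto simp: C cd_coord_lincomb intro!: arg_cong[where f = sum_list] map_cong)
    also have "\<dots> = (\<Sum>m\<leftarrow>[0..<2 * ?L].
        W m * (\<Sum>j\<leftarrow>filter (\<lambda>j. j < ?L \<and> m - j < ?L) [0..<Suc m]. P j (m - j)))"
      unfolding c_def P_def using fk
      by (intro arg_cong[where f = sum_list] map_cong refl arg_cong[where f = "\<lambda>x. _ * x"])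
         (subst cd_coord_sum[where n = ?n], auto simp del: upt_Suc)
    also have "\<dots> = (\<Sum>j\<leftarrow>[0..<?L]. \<Sum>k\<leftarrow>[0..<?L]. W (j + k) * P j k)"
      by (rule sum_list_convolution)
    also have "\<dots> = (\<Sum>j\<leftarrow>[0..<?L]. cd_coord (cd_mult mu gs (cd_conj (fs ! j))
                                     (cd_lincomb ?n (\<lambda>k. W (j + k)) fs)) i)"
    proof (intro arg_cong[where f = sum_list] map_cong refl)
      fix j assume "j \<in> set [0..<?L]"
      then show "(\<Sum>k\<leftarrow>[0..<?L]. W (j + k) * P j k) =
          cd_coord (cd_mult mu gs (cd_conj (fs ! j)) (cd_lincomb ?n (\<lambda>k. W (j + k)) fs)) i"
        using fs fk by (simp add: cd_coord_mult_lincomb P_def)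
    qed
    also have "\<dots> = cd_coord (cd_sum ?n (map (\<lambda>j. cd_mult mu gs (cd_conj (fs ! j))
                                     (cd_lincomb ?n (\<lambda>k. W (j + k)) fs)) [0..<?L])) i"
      using fs fk by (subst cd_coord_sum[where n = ?n]) auto
    finally show "cd_coord (cd_lincomb ?n W (cd_companion mu gs fs)) i = \<dots>" .
  qed (use fs c fk C in \<open>auto intro!: cd_sum_carrier\<close>)
qed

lemma cd_companion_carrier:
  assumes "\<forall>a \<in> set fs. a \<in> cd_carrier (length gs)"
  shows "\<forall>a \<in> set (cd_companion mu gs fs). a \<in> cd_carrier (length gs)"
  using assms unfolding cd_companion_def by (auto intro!: cd_sum_carrier simp del: upt_Suc)

lemma cd_lincomb_companion_eq_zero:
  assumes fs: "\<forall>a \<in> set fs. a \<in> cd_carrier (length gs)"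
    and rem1: "cd_lincomb (length gs) (xrem1 t N) fs = cd_zero (length gs)"
    and rem0: "cd_lincomb (length gs) (xrem0 t N) fs = cd_zero (length gs)"
    and W: "\<And>j k. W (j + k) = A j * xrem1 t N k + B j * xrem0 t N k"
  shows "cd_lincomb (length gs) W (cd_companion mu gs fs) = cd_zero (length gs)"
proof -
  have "cd_lincomb (length gs) (\<lambda>k. W (j + k)) fs = cd_zero (length gs)" for j
    using cd_lincomb_linear[OF fs, of "A j" "xrem1 t N" "B j" "xrem0 t N"] rem1 rem0 by (simp add: W)
  then have zeros: "map (\<lambda>j. cd_mult mu gs (cd_conj (fs ! j)) (cd_lincomb (length gs) (\<lambda>k. W (j + k)) fs))
      [0..<length fs] = map (\<lambda>j. cd_zero (length gs)) [0..<length fs]"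
    using fs by (auto simp: nth_mem)
  show ?thesis unfolding cd_lincomb_companion[OF fs] zeros by (rule cd_sum_zeros)
qed

lemma cd_companion_rem_zero:
  assumes fs: "\<forall>a \<in> set fs. a \<in> cd_carrier (length gs)"
    and rem1: "cd_lincomb (length gs) (xrem1 t N) fs = cd_zero (length gs)"
    and rem0: "cd_lincomb (length gs) (xrem0 t N) fs = cd_zero (length gs)"
  shows "cd_lincomb (length gs) (xrem1 t N) (cd_companion mu gs fs) = cd_zero (length gs) \<and>
         cd_lincomb (length gs) (xrem0 t N) (cd_companion mu gs fs) = cd_zero (length gs)"
  using cd_lincomb_companion_eq_zero[OF fs rem1 rem0, where W = "xrem1 t N"
      and A = "\<lambda>j. t * xrem1 t N j + xrem0 t N j" and B = "xrem1 t N"]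
    cd_lincomb_companion_eq_zero[OF fs rem1 rem0, where W = "xrem0 t N"
      and A = "\<lambda>j. - (N * xrem1 t N j)" and B = "xrem0 t N"]
  by (simp add: xpow_rem_add algebra_simps)

theorem theorem3p13:
  fixes mu :: "'a::field" and gs :: "'a list" and fs :: "'a cd list" and l :: "'a cd"
  assumes "cd_valid mu gs"
    and "\<forall>a \<in> set fs. a \<in> cd_carrier (length gs)"
    and "cd_spherical_root mu gs fs l"
  shows "cd_poly_eval mu gs (cd_companion mu gs fs) l = cd_zero (length gs)"
proof -
  let ?t = "cd_trace l" and ?N = "cd_normf mu gs l"
  have l: "l \<in> cd_carrier (length gs)" using assms(3) by (simp add: cd_spherical_root_def)
  have "cd_lincomb (length gs) (xrem1 ?t ?N) fs = cd_zero (length gs)"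
    "cd_lincomb (length gs) (xrem0 ?t ?N) fs = cd_zero (length gs)"
    using cd_spherical_root_rem_zero[OF assms] by simp_all
  then have "cd_lincomb (length gs) (xrem1 ?t ?N) (cd_companion mu gs fs) = cd_zero (length gs)"
    "cd_lincomb (length gs) (xrem0 ?t ?N) (cd_companion mu gs fs) = cd_zero (length gs)"
    using cd_companion_rem_zero[OF assms(2)] by simp_all
  then show ?thesis
    using cd_poly_eval_quadratic[OF cd_companion_carrier[OF assms(2)] l cd_mult_self[OF l]] l
    by simp
qed

end
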